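(* Let $n>24$, $0<\epsilon<\frac13$, and let $m$ be a positive integer with load factor $L=\frac mn>\epsilon^{-2}$. Then $$\mathsf P\left\{\left|\sum_{i=1}^n \frac{k_i(x)(k_i(x)-1)}{m(m-1)}\cdot\frac{1}{\|p\|^2}-1\right|\le 22\,\epsilon\right\}\ \ge\ 1-\frac{10}{9}e^{-L\epsilon^2}.$$
   Context: Standing setup: $U$ is a finite set (the key space) with a probability measure $q$; $T=\{1,\dots,n\}$; $h:U\to T$ is an arbitrary function. $p_i=\sum_{u\in h^{-1}(i)}q(u)$ and $\|p\|^2=\sum_{i=1}^n p_i^2$. $U^m$ carries the product measure $q^m$, and $\mathsf P$ denotes probability under $q^m$ of the event for $x=(x_1,\dots,x_m)\in U^m$. $k_i(x)=|\{j: h(x_j)=i\}|$. *)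

theory Defs
  imports "HOL-Probability.Probability"
begin

definition bucket_count :: "('u \<Rightarrow> nat) \<Rightarrow> nat \<Rightarrow> (nat \<Rightarrow> 'u) \<Rightarrow> nat \<Rightarrow> nat" where
  "bucket_count h m x i = card {j \<in> {..<m}. h (x j) = i}"

definition bucket_prob :: "'u pmf \<Rightarrow> ('u \<Rightarrow> nat) \<Rightarrow> nat \<Rightarrow> real" where
  "bucket_prob q h i = measure_pmf.prob q (h -` {i})"

definition sq_norm_p :: "'u pmf \<Rightarrow> ('u \<Rightarrow> nat) \<Rightarrow> nat \<Rightarrow> real" where
  "sq_norm_p q h n = (\<Sum>i=1..n. (bucket_prob q h i)^2)"

definition sample_pmf :: "'u pmf \<Rightarrow> nat \<Rightarrow> (nat \<Rightarrow> 'u) pmf" where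
  "sample_pmf q m = Pi_pmf {..<m} undefined (\<lambda>_. q)"

end

theory Submission
  imports Defs "HOL-Combinatorics.Permutations"
begin

(* The normalised collision count R(x) = sum_i k_i (k_i - 1) / (m (m - 1)) is a
   U-statistic of order two with mean ||p||^2.  Following Hoeffding, R is the average over all
   permutations s of the sample indices of B(x o s) / k, where k = m div 2 and B counts the
   collisions inside the k disjoint pairs (x_(2l), x_(2l+1)).  As exp is convex and the sample is
   exchangeable, E exp(theta R) <= E exp(theta B / k); and B is a sum of k independent
   Bernoulli(||p||^2) variables, so E exp(theta R) <= exp(k ||p||^2 (e^(theta/k) - 1)).
   Chernoff bounds with theta = +-k t/8 and t = 22 eps bound each tail by
   exp(-(847/16) eps^2 k ||p||^2), and ||p||^2 >= 1/n turns this into a bound in the load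
   factor m/n. *)

lemma finite_set_Pi_pmf_finite:
  fixes q :: "'u::finite pmf"
  assumes "finite I"
  shows "finite (set_pmf (Pi_pmf I d (\<lambda>_. q)))"
  by (intro finite_subset[OF set_Pi_pmf_subset'] finite_PiE_dflt) (use assms in auto)

lemma integrable_Pi_pmf_finite:
  fixes q :: "'u::finite pmf" and f :: "('i \<Rightarrow> 'u) \<Rightarrow> real"
  assumes "finite I"
  shows "integrable (measure_pmf (Pi_pmf I d (\<lambda>_. q))) f"
  by (rule integrable_measure_pmf_finite[OF finite_set_Pi_pmf_finite[OF assms]])

lemma expectation_Pi_pmf_two_coordinates:
  fixes q :: "'u pmf" and f g :: "'u \<Rightarrow> real"
  assumes "finite I" "a \<in> I" "b \<in> I" "a \<noteq> b"
    and "integrable q f" "integrable q g" "\<And>u. 0 \<le> f u" "\<And>u. 0 \<le> g u"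
  shows "measure_pmf.expectation (Pi_pmf I d (\<lambda>_. q)) (\<lambda>x. f (x a) * g (x b))
       = measure_pmf.expectation q f * measure_pmf.expectation q g"
proof -
  define F where "F j = (if j = a then f else if j = b then g else (\<lambda>_. 1))" for j
  have "(\<Prod>j\<in>I. F j (x j)) = (\<Prod>j\<in>{a,b}. F j (x j))" for x
    by (rule prod.mono_neutral_right) (use assms in \<open>auto simp: F_def\<close>)
  then have "measure_pmf.expectation (Pi_pmf I d (\<lambda>_. q)) (\<lambda>x. f (x a) * g (x b))
      = measure_pmf.expectation (Pi_pmf I d (\<lambda>_. q)) (\<lambda>x. \<Prod>j\<in>I. F j (x j))"
    using assms(4) by (simp add: F_def)
  also have "\<dots> = (\<Prod>j\<in>I. measure_pmf.expectation q (F j))"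
    by (rule expectation_prod_Pi_pmf) (use assms in \<open>auto simp: F_def\<close>)
  also have "\<dots> = (\<Prod>j\<in>{a,b}. measure_pmf.expectation q (F j))"
    by (rule prod.mono_neutral_right) (use assms in \<open>auto simp: F_def\<close>)
  also have "\<dots> = measure_pmf.expectation q f * measure_pmf.expectation q g"
    using assms(4) by (simp add: F_def)
  finally show ?thesis .
qed

lemma expectation_Pi_pmf_compose_permutes:
  fixes F :: "('i \<Rightarrow> 'u) \<Rightarrow> real"
  assumes "finite I" "\<sigma> permutes I"
  shows "measure_pmf.expectation (Pi_pmf I d (\<lambda>_. q)) (\<lambda>x. F (x \<circ> \<sigma>))
       = measure_pmf.expectation (Pi_pmf I d (\<lambda>_. q)) F"
proof -
  have "Pi_pmf I d (\<lambda>_. q) = map_pmf (\<lambda>x. x \<circ> \<sigma>) (Pi_pmf I d (\<lambda>_. q))"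
    by (rule Pi_pmf_bij_betw)
      (use assms permutes_imp_bij[OF assms(2)] in \<open>auto simp: permutes_not_in\<close>)
  then show ?thesis
    by (metis integral_map_pmf)
qed

lemma prob_ge_le_expectation_exp:
  fixes P :: "'a pmf" and F :: "'a \<Rightarrow> real"
  assumes "integrable P (\<lambda>x. exp (F x))"
  shows "measure_pmf.prob P {x. c \<le> F x} \<le> measure_pmf.expectation P (\<lambda>x. exp (F x)) / exp c"
  using integral_Markov_inequality_measure[OF assms, of UNIV "exp c"] by simp

lemma one_plus_power_le_exp:
  fixes y :: real
  assumes "-1 \<le> y"
  shows "(1 + y) ^ k \<le> exp (real k * y)"
proof -
  have "(1 + y) ^ k \<le> exp y ^ k"
    using assms by (intro power_mono exp_ge_add_one_self) simp
  then show ?thesis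
    by (simp add: exp_of_nat_mult)
qed

lemma exp_le_quadratic:
  fixes x :: real
  assumes "\<bar>x\<bar> \<le> 1"
  shows "exp x \<le> 1 + x + x^2"
proof (cases "0 \<le> x")
  case True
  then show ?thesis
    using assms exp_bound by simp
next
  case False
  define y where "y = - x"
  have "0 \<le> y"
    using False by (simp add: y_def)
  have lower: "1 + y + y^2/2 \<le> exp y"
    by (rule exp_lower_Taylor_quadratic) fact
  have pos: "0 < 1 + y + y^2/2"
    using \<open>0 \<le> y\<close> by (simp add: add_pos_nonneg)
  have "(1 - y + y^2) * (1 + y + y^2/2) = 1 + y^2/2 + y^3/2 + y^4/2"
    unfolding power2_eq_square power3_eq_cube power4_eq_xxxx by (simp add: field_simps)
  also have "\<dots> \<ge> 1"
    using \<open>0 \<le> y\<close> by simp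
  finally have quadratic: "1 \<le> (1 - y + y^2) * (1 + y + y^2/2)" .
  have "exp x = 1 / exp y"
    by (simp add: y_def exp_minus field_simps)
  also have "\<dots> \<le> 1 / (1 + y + y^2/2)"
    using lower pos by (intro divide_left_mono) auto
  also have "\<dots> \<le> 1 - y + y^2"
    using quadratic pos by (simp add: divide_simps)
  finally show ?thesis
    by (simp add: y_def)
qed

lemma exists_permutes_0_1:
  fixes m :: nat
  assumes "i < m" "j < m" "i \<noteq> j"
  shows "\<exists>\<tau>. \<tau> permutes {..<m} \<and> \<tau> 0 = i \<and> \<tau> 1 = j"
proof -
  have "1 < m"
    using assms by (cases i) auto
  define r where "r = Transposition.transpose 0 i"
  define a where "a = Transposition.transpose (r 1) j"
  have r: "r permutes {..<m}"
    unfolding r_def using assms by (intro permutes_swap_id) auto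
  then have "r 1 < m"
    using \<open>1 < m\<close> permutes_in_image by (metis lessThan_iff)
  then have a: "a permutes {..<m}"
    unfolding a_def using assms by (intro permutes_swap_id) auto
  have "r 0 = i" "r 1 \<noteq> i"
    unfolding r_def by (auto simp: Transposition.transpose_def)
  then have "(a \<circ> r) 0 = i" "(a \<circ> r) 1 = j"
    unfolding a_def using assms by (auto simp: Transposition.transpose_def)
  with permutes_compose[OF r a] show ?thesis by blast
qed

lemma sum_permutes_pair_eq:
  fixes m :: nat
  assumes "i < m" "j < m" "i \<noteq> j"
  shows "(\<Sum>\<sigma> | \<sigma> permutes {..<m}. f (\<sigma> i) (\<sigma> j)) = (\<Sum>\<sigma> | \<sigma> permutes {..<m}. f (\<sigma> 0) (\<sigma> 1))"
proof -
  obtain \<tau> where "\<tau> permutes {..<m}" "\<tau> 0 = i" "\<tau> 1 = j"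
    using exists_permutes_0_1[OF assms] by blast
  then show ?thesis
    using sum_permutations_compose_right[of \<tau> "{..<m}" "\<lambda>\<sigma>. f (\<sigma> 0) (\<sigma> 1)"] by simp
qed

lemma sum_off_diagonal_permutes:
  assumes "\<sigma> permutes {..<m}"
  shows "(\<Sum>a<m. \<Sum>b\<in>{..<m}-{a}. f (\<sigma> a) (\<sigma> b)) = (\<Sum>a<m. \<Sum>b\<in>{..<m}-{a}. f a b)"
proof -
  have bij: "bij_betw \<sigma> {..<m} {..<m}"
    by (rule permutes_imp_bij[OF assms])
  have inner: "(\<Sum>b\<in>{..<m}-{a}. f (\<sigma> a) (\<sigma> b)) = (\<Sum>b\<in>{..<m}-{\<sigma> a}. f (\<sigma> a) b)"
    if "a \<in> {..<m}" for a
    by (rule sum.reindex_bij_betw, rule bij_betw_DiffI[OF bij])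
      (use that permutes_in_image[OF assms] in \<open>auto simp: bij_betw_def\<close>)
  have "(\<Sum>a<m. \<Sum>b\<in>{..<m}-{a}. f (\<sigma> a) (\<sigma> b)) = (\<Sum>a<m. \<Sum>b\<in>{..<m}-{\<sigma> a}. f (\<sigma> a) b)"
    by (rule sum.cong[OF refl inner])
  also have "\<dots> = (\<Sum>a<m. \<Sum>b\<in>{..<m}-{a}. f a b)"
    by (rule sum.reindex_bij_betw[OF bij])
  finally show ?thesis .
qed

lemma sum_permutes_pair_mult:
  fixes f :: "nat \<Rightarrow> nat \<Rightarrow> real"
  assumes "2 \<le> m"
  shows "(\<Sum>\<sigma> | \<sigma> permutes {..<m}. f (\<sigma> 0) (\<sigma> 1)) * (real m * (real m - 1))
       = fact m * (\<Sum>a<m. \<Sum>b\<in>{..<m}-{a}. f a b)"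
proof -
  let ?S = "{\<sigma>. \<sigma> permutes {..<m}}"
  have "(\<Sum>\<sigma>\<in>?S. f (\<sigma> 0) (\<sigma> 1)) * (real m * (real m - 1))
      = (\<Sum>a<m. \<Sum>b\<in>{..<m}-{a}. \<Sum>\<sigma>\<in>?S. f (\<sigma> 0) (\<sigma> 1))"
    using assms by (simp add: card_Diff_singleton of_nat_diff)
  also have "\<dots> = (\<Sum>a<m. \<Sum>b\<in>{..<m}-{a}. \<Sum>\<sigma>\<in>?S. f (\<sigma> a) (\<sigma> b))"
    by (intro sum.cong refl sum_permutes_pair_eq[symmetric]) auto
  also have "\<dots> = (\<Sum>\<sigma>\<in>?S. \<Sum>a<m. \<Sum>b\<in>{..<m}-{a}. f (\<sigma> a) (\<sigma> b))"
    by (subst sum.swap) (rule sum.cong[OF refl], rule sum.swap)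
  also have "\<dots> = (\<Sum>\<sigma>\<in>?S. \<Sum>a<m. \<Sum>b\<in>{..<m}-{a}. f a b)"
    by (intro sum.cong refl sum_off_diagonal_permutes) simp
  also have "\<dots> = fact m * (\<Sum>a<m. \<Sum>b\<in>{..<m}-{a}. f a b)"
    by (simp add: card_permutations)
  finally show ?thesis .
qed

definition same_bucket :: "('u \<Rightarrow> nat) \<Rightarrow> 'u \<Rightarrow> 'u \<Rightarrow> real" where
  "same_bucket h u v = of_bool (h u = h v)"

definition collisions :: "('u \<Rightarrow> nat) \<Rightarrow> nat \<Rightarrow> (nat \<Rightarrow> 'u) \<Rightarrow> real" where
  "collisions h m x = (\<Sum>a<m. \<Sum>b\<in>{..<m}-{a}. same_bucket h (x a) (x b))"

definition collision_rate :: "('u \<Rightarrow> nat) \<Rightarrow> nat \<Rightarrow> (nat \<Rightarrow> 'u) \<Rightarrow> real" where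
  "collision_rate h m x = collisions h m x / (real m * (real m - 1))"

definition paired_collisions :: "('u \<Rightarrow> nat) \<Rightarrow> nat \<Rightarrow> (nat \<Rightarrow> 'u) \<Rightarrow> real" where
  "paired_collisions h k x = (\<Sum>l<k. same_bucket h (x (2*l)) (x (2*l+1)))"

lemma bucket_count_eq_sum: "real (bucket_count h m x i) = (\<Sum>j<m. of_bool (h (x j) = i))"
  by (simp add: bucket_count_def Int_def)

lemma bucket_count_mult_pred:
  "real (bucket_count h m x i) * (real (bucket_count h m x i) - 1)
     = (\<Sum>a<m. \<Sum>b\<in>{..<m}-{a}. of_bool (h (x a) = i) * of_bool (h (x b) = i))"
proof -
  define c where "c j = (of_bool (h (x j) = i) :: real)" for j
  have idem: "c a * c a = c a" for a
    by (simp add: c_def)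
  have "(\<Sum>b\<in>{..<m}-{a}. c a * c b) = c a * (\<Sum>b<m. c b) - c a" if "a \<in> {..<m}" for a
    using that by (simp add: sum_distrib_left[symmetric] sum_diff1 idem right_diff_distrib)
  then have "(\<Sum>a<m. \<Sum>b\<in>{..<m}-{a}. c a * c b) = (\<Sum>a<m. c a * (\<Sum>b<m. c b) - c a)"
    by (rule sum.cong[OF refl])
  also have "\<dots> = (\<Sum>b<m. c b) * ((\<Sum>b<m. c b) - 1)"
    by (simp add: sum_subtractf sum_distrib_right[symmetric] algebra_simps)
  finally show ?thesis
    unfolding bucket_count_eq_sum c_def by simp
qed

lemma sum_bucket_indicator_mult:
  assumes "h u \<in> {1..n}"
  shows "(\<Sum>i=1..n. of_bool (h u = i) * of_bool (h v = i)) = same_bucket h u v"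
proof -
  have "(\<Sum>i=1..n. of_bool (h u = i) * of_bool (h v = i)) = (\<Sum>i=1..n. if i = h u then same_bucket h u v else 0)"
    by (intro sum.cong) (auto simp: same_bucket_def)
  then show ?thesis
    using assms by simp
qed

lemma sum_bucket_count_eq_collisions:
  assumes "\<And>u. h u \<in> {1..n}"
  shows "(\<Sum>i=1..n. real (bucket_count h m x i) * (real (bucket_count h m x i) - 1)) = collisions h m x"
proof -
  have "(\<Sum>i=1..n. real (bucket_count h m x i) * (real (bucket_count h m x i) - 1))
      = (\<Sum>a<m. \<Sum>b\<in>{..<m}-{a}. \<Sum>i=1..n. of_bool (h (x a) = i) * of_bool (h (x b) = i))"
    unfolding bucket_count_mult_pred by (subst sum.swap) (rule sum.cong[OF refl], rule sum.swap)
  then show ?thesis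
    using sum_bucket_indicator_mult[of h _ n] assms by (simp add: collisions_def)
qed

lemma collision_rate_eq_average_permutes:
  assumes "0 < k" "2 * k \<le> m"
  shows "collision_rate h m x
       = (\<Sum>\<sigma> | \<sigma> permutes {..<m}. paired_collisions h k (x \<circ> \<sigma>)) / (real k * fact m)"
proof -
  let ?S = "{\<sigma>. \<sigma> permutes {..<m}}"
  define f where "f a b = same_bucket h (x a) (x b)" for a b
  have "(\<Sum>\<sigma>\<in>?S. paired_collisions h k (x \<circ> \<sigma>)) = (\<Sum>l<k. \<Sum>\<sigma>\<in>?S. f (\<sigma> (2*l)) (\<sigma> (2*l+1)))"
    unfolding paired_collisions_def f_def by (simp add: sum.swap[of _ ?S])
  also have "\<dots> = (\<Sum>l<k. \<Sum>\<sigma>\<in>?S. f (\<sigma> 0) (\<sigma> 1))"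
    using assms by (intro sum.cong refl sum_permutes_pair_eq) auto
  also have "\<dots> = real k * (\<Sum>\<sigma>\<in>?S. f (\<sigma> 0) (\<sigma> 1))"
    by simp
  finally have "(\<Sum>\<sigma>\<in>?S. paired_collisions h k (x \<circ> \<sigma>)) * (real m * (real m - 1))
      = real k * fact m * collisions h m x"
    using sum_permutes_pair_mult[of m f] assms by (simp add: collisions_def f_def)
  moreover have "real m * (real m - 1) > 0"
    using assms by simp
  ultimately show ?thesis
    using assms by (simp add: collision_rate_def field_simps)
qed

lemma sum_bucket_prob:
  assumes "\<And>u. h u \<in> {1..n}"
  shows "(\<Sum>i=1..n. bucket_prob q h i) = 1"
proof -
  have "(\<Sum>i=1..n. bucket_prob q h i) = measure_pmf.prob q (\<Union>i\<in>{1..n}. h -` {i})"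
    unfolding bucket_prob_def
    by (rule measure_pmf.finite_measure_finite_Union[symmetric]) (auto simp: disjoint_family_on_def)
  also have "(\<Union>i\<in>{1..n}. h -` {i}) = UNIV"
    using assms by auto
  finally show ?thesis
    by simp
qed

lemma sq_norm_p_nonneg: "0 \<le> sq_norm_p q h n"
  by (simp add: sq_norm_p_def sum_nonneg)

lemma sq_norm_p_le_1:
  assumes "\<And>u. h u \<in> {1..n}"
  shows "sq_norm_p q h n \<le> 1"
proof -
  have "bucket_prob q h i ^ 2 \<le> bucket_prob q h i" for i
    unfolding bucket_prob_def power2_eq_square by (simp add: mult_left_le)
  then have "sq_norm_p q h n \<le> (\<Sum>i=1..n. bucket_prob q h i)"
    unfolding sq_norm_p_def by (rule sum_mono)
  then show ?thesis
    using sum_bucket_prob[of h n q, OF assms] by simp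
qed

lemma inverse_le_sq_norm_p:
  assumes "\<And>u. h u \<in> {1..n}" and "0 < n"
  shows "1 / real n \<le> sq_norm_p q h n"
proof -
  have "0 \<le> (\<Sum>i=1..n. (bucket_prob q h i - 1 / real n)^2)"
    by (rule sum_nonneg) simp
  also have "\<dots> = sq_norm_p q h n - 2 / real n * (\<Sum>i=1..n. bucket_prob q h i) + real n * (1 / real n)^2"
    by (simp add: power2_diff sum.distrib sum_subtractf sum_distrib_left sq_norm_p_def algebra_simps)
  also have "\<dots> = sq_norm_p q h n - 1 / real n"
    using assms(2) sum_bucket_prob[of h n q, OF assms(1)] by (simp add: power2_eq_square field_simps)
  finally show ?thesis
    by simp
qed

lemma half_load_le_mult_sq_norm_p:
  assumes "\<And>u. h u \<in> {1..n}" and "0 < n"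
  shows "(real m / real n - 1 / real n) / 2 \<le> real (m div 2) * sq_norm_p q h n"
proof -
  have "(real m / real n - 1 / real n) / 2 = (real m - 1) / real n / 2"
    by (simp add: diff_divide_distrib)
  also have "\<dots> \<le> 2 * real (m div 2) / real n / 2"
    by (intro divide_right_mono) linarith+
  also have "\<dots> = real (m div 2) * (1 / real n)"
    by simp
  also have "\<dots> \<le> real (m div 2) * sq_norm_p q h n"
    by (intro mult_left_mono inverse_le_sq_norm_p[of h n q, OF assms]) simp
  finally show ?thesis .
qed

lemma expectation_same_bucket:
  fixes q :: "'u::finite pmf"
  assumes "finite I" "a \<in> I" "b \<in> I" "a \<noteq> b" and "\<And>u. h u \<in> {1..n}"
  shows "measure_pmf.expectation (Pi_pmf I d (\<lambda>_. q)) (\<lambda>x. same_bucket h (x a) (x b))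
       = sq_norm_p q h n"
proof -
  let ?P = "Pi_pmf I d (\<lambda>_. q)"
  have "measure_pmf.expectation ?P (\<lambda>x. same_bucket h (x a) (x b))
      = measure_pmf.expectation ?P (\<lambda>x. \<Sum>i=1..n. of_bool (h (x a) = i) * of_bool (h (x b) = i))"
    using sum_bucket_indicator_mult[of h _ n] assms(5) by simp
  also have "\<dots> = (\<Sum>i=1..n. measure_pmf.expectation ?P (\<lambda>x. of_bool (h (x a) = i) * of_bool (h (x b) = i)))"
    by (rule Bochner_Integration.integral_sum) (rule integrable_Pi_pmf_finite[OF assms(1)])
  also have "\<dots> = (\<Sum>i=1..n. bucket_prob q h i ^ 2)"
  proof (rule sum.cong[OF refl])
    fix i
    have "measure_pmf.expectation q (\<lambda>u. of_bool (h u = i)) = measure_pmf.expectation q (indicator (h -` {i}))"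
      by (intro Bochner_Integration.integral_cong) (auto simp: indicator_def)
    also have "\<dots> = bucket_prob q h i"
      unfolding bucket_prob_def
      by simp
    finally have "measure_pmf.expectation q (\<lambda>u. of_bool (h u = i)) = bucket_prob q h i" .
    then show "measure_pmf.expectation ?P (\<lambda>x. of_bool (h (x a) = i) * of_bool (h (x b) = i))
        = bucket_prob q h i ^ 2"
      by (subst expectation_Pi_pmf_two_coordinates)
        (use assms in \<open>auto simp: integrable_measure_pmf_finite power2_eq_square\<close>)
  qed
  finally show ?thesis
    by (simp add: sq_norm_p_def)
qed

lemma expectation_prod_disjoint_pairs:
  fixes q :: "'u::finite pmf" and F :: "'u \<Rightarrow> 'u \<Rightarrow> real" and k m :: nat
  assumes "2 * k \<le> m"
  shows "measure_pmf.expectation (Pi_pmf {..<m} d (\<lambda>_. q)) (\<lambda>x. \<Prod>l<k. F (x (2*l)) (x (2*l+1)))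
       = (\<Prod>l<k. measure_pmf.expectation (Pi_pmf {..<m} d (\<lambda>_. q)) (\<lambda>x. F (x (2*l)) (x (2*l+1))))"
proof -
  let ?P = "Pi_pmf {..<m} d (\<lambda>_. q)"
  define K where "K l = {2*l, 2*l+1}" for l :: nat
  define Y where "Y l r = F (r (2*l)) (r (2*l+1))" for l :: nat and r :: "nat \<Rightarrow> 'u"
  have coordinates: "prob_space.indep_vars (measure_pmf ?P) (\<lambda>_. count_space UNIV) (\<lambda>j x. x j) {..<m}"
    by (rule indep_vars_Pi_pmf) simp
  have "prob_space.indep_vars (measure_pmf ?P) (\<lambda>l. PiM (K l) (\<lambda>_. count_space UNIV))
      (\<lambda>l x. restrict x (K l)) {..<k}"
    using prob_space.indep_vars_restrict[OF measure_pmf.prob_space_axioms coordinates, where L="{..<k}" and K=K] assms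
    by (auto simp: K_def disjoint_family_on_def)
  moreover have "Y l \<in> borel_measurable (PiM (K l) (\<lambda>_. count_space UNIV))" for l
    unfolding Y_def K_def by measurable
  ultimately have blocks: "prob_space.indep_vars (measure_pmf ?P) (\<lambda>_. borel)
      (\<lambda>l x. Y l (restrict x (K l))) {..<k}"
    by (rule prob_space.indep_vars_compose2[OF measure_pmf.prob_space_axioms])
  have "measure_pmf.expectation ?P (\<lambda>x. \<Prod>l<k. Y l (restrict x (K l)))
      = (\<Prod>l<k. measure_pmf.expectation ?P (\<lambda>x. Y l (restrict x (K l))))"
    by (rule prob_space.indep_vars_lebesgue_integral[OF measure_pmf.prob_space_axioms finite_lessThan blocks])
      (simp add: integrable_Pi_pmf_finite)
  moreover have "Y l (restrict x (K l)) = F (x (2*l)) (x (2*l+1))" for l x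
    by (simp add: Y_def K_def)
  ultimately show ?thesis
    by simp
qed

lemma expectation_exp_paired_collisions:
  fixes q :: "'u::finite pmf" and k m :: nat
  assumes "2 * k \<le> m" and "\<And>u. h u \<in> {1..n}"
  shows "measure_pmf.expectation (Pi_pmf {..<m} d (\<lambda>_. q)) (\<lambda>x. exp (\<mu> * paired_collisions h k x))
       = (1 + (exp \<mu> - 1) * sq_norm_p q h n) ^ k"
proof -
  let ?P = "Pi_pmf {..<m} d (\<lambda>_. q)"
  have exp_same_bucket: "exp (\<mu> * same_bucket h u v) = 1 + (exp \<mu> - 1) * same_bucket h u v" for u v
    by (simp add: same_bucket_def)
  have "measure_pmf.expectation ?P (\<lambda>x. exp (\<mu> * same_bucket h (x (2*l)) (x (2*l+1))))
      = 1 + (exp \<mu> - 1) * sq_norm_p q h n" if "l \<in> {..<k}" for l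
  proof -
    have "measure_pmf.expectation ?P (\<lambda>x. exp (\<mu> * same_bucket h (x (2*l)) (x (2*l+1))))
        = 1 + (exp \<mu> - 1) * measure_pmf.expectation ?P (\<lambda>x. same_bucket h (x (2*l)) (x (2*l+1)))"
      by (simp add: exp_same_bucket integrable_Pi_pmf_finite)
    also have "measure_pmf.expectation ?P (\<lambda>x. same_bucket h (x (2*l)) (x (2*l+1))) = sq_norm_p q h n"
      using that assms by (intro expectation_same_bucket) auto
    finally show ?thesis .
  qed
  note pair = this
  have "exp (\<mu> * paired_collisions h k x) = (\<Prod>l<k. exp (\<mu> * same_bucket h (x (2*l)) (x (2*l+1))))" for x
    by (simp add: paired_collisions_def sum_distrib_left exp_sum)
  then have "measure_pmf.expectation ?P (\<lambda>x. exp (\<mu> * paired_collisions h k x))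
      = measure_pmf.expectation ?P (\<lambda>x. \<Prod>l<k. exp (\<mu> * same_bucket h (x (2*l)) (x (2*l+1))))"
    by simp
  also have "\<dots> = (\<Prod>l<k. measure_pmf.expectation ?P (\<lambda>x. exp (\<mu> * same_bucket h (x (2*l)) (x (2*l+1)))))"
    by (rule expectation_prod_disjoint_pairs[OF assms(1)])
  also have "\<dots> = (\<Prod>l<k. 1 + (exp \<mu> - 1) * sq_norm_p q h n)"
    by (rule prod.cong[OF refl pair])
  finally show ?thesis
    by simp
qed

lemma expectation_exp_collision_rate_le:
  fixes q :: "'u::finite pmf" and k m :: nat
  assumes "\<And>u. h u \<in> {1..n}" and "0 < k" "2 * k \<le> m"
  shows "measure_pmf.expectation (Pi_pmf {..<m} d (\<lambda>_. q)) (\<lambda>x. exp (\<theta> * collision_rate h m x))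
       \<le> exp (real k * ((exp (\<theta> / k) - 1) * sq_norm_p q h n))"
proof -
  let ?P = "Pi_pmf {..<m} d (\<lambda>_. q)"
  let ?S = "{\<sigma>. \<sigma> permutes {..<m}}"
  let ?B = "\<lambda>x. exp (\<theta> / k * paired_collisions h k x)"
  let ?s = "sq_norm_p q h n"
  have card_S: "card ?S = fact m"
    by (simp add: card_permutations)
  have average_constant: "(\<Sum>\<sigma>\<in>?S. c) / fact m = c" for c :: real
    by (simp add: card_S)
  have S_nonempty: "?S \<noteq> {}"
    using permutes_id by blast
  have jensen: "exp (\<theta> * collision_rate h m x) \<le> (\<Sum>\<sigma>\<in>?S. ?B (x \<circ> \<sigma>) / fact m)" for x
  proof -
    have "\<theta> * collision_rate h m x = (\<Sum>\<sigma>\<in>?S. (1 / fact m) *\<^sub>R (\<theta> / k * paired_collisions h k (x \<circ> \<sigma>)))"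
      unfolding collision_rate_eq_average_permutes[OF assms(2,3)] sum_divide_distrib sum_distrib_left
      by (intro sum.cong refl) (simp add: field_simps)
    also have "exp \<dots> \<le> (\<Sum>\<sigma>\<in>?S. (1 / fact m) * ?B (x \<circ> \<sigma>))"
      by (rule convex_on_sum[OF finite_permutations[OF finite_lessThan] S_nonempty exp_convex])
        (auto simp: card_S)
    finally show ?thesis
      by (simp only: mult.commute[of "1 / fact m"] times_divide_eq_right mult_1_right)
  qed
  have "measure_pmf.expectation ?P (\<lambda>x. exp (\<theta> * collision_rate h m x))
      \<le> measure_pmf.expectation ?P (\<lambda>x. \<Sum>\<sigma>\<in>?S. ?B (x \<circ> \<sigma>) / fact m)"
    by (intro integral_mono jensen integrable_Pi_pmf_finite finite_lessThan)
  also have "\<dots> = (\<Sum>\<sigma>\<in>?S. measure_pmf.expectation ?P (\<lambda>x. ?B (x \<circ> \<sigma>))) / fact m"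
    by (simp add: integrable_Pi_pmf_finite sum_divide_distrib)
  also have "\<dots> = (\<Sum>\<sigma>\<in>?S. measure_pmf.expectation ?P ?B) / fact m"
    by (rule arg_cong[where f = "\<lambda>r. r / fact m"], rule sum.cong[OF refl],
        rule expectation_Pi_pmf_compose_permutes[where F = ?B]) auto
  also have "\<dots> = measure_pmf.expectation ?P ?B"
    by (rule average_constant)
  also have "\<dots> = (1 + (exp (\<theta> / k) - 1) * ?s) ^ k"
    by (rule expectation_exp_paired_collisions[OF assms(3,1)])
  also have "\<dots> \<le> exp (real k * ((exp (\<theta> / k) - 1) * ?s))"
  proof (rule one_plus_power_le_exp)
    have "0 \<le> exp (\<theta> / k) * ?s"
      using sq_norm_p_nonneg[of q h n] by simp
    then show "-1 \<le> (exp (\<theta> / k) - 1) * ?s"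
      using sq_norm_p_le_1[of h n q, OF assms(1)] by (simp add: left_diff_distrib)
  qed
  finally show ?thesis .
qed

lemma expectation_exp_collision_rate_le_quadratic:
  fixes q :: "'u::finite pmf" and k m :: nat
  assumes "\<And>u. h u \<in> {1..n}" and "0 < k" "2 * k \<le> m" and "\<bar>y\<bar> \<le> 1"
  shows "measure_pmf.expectation (Pi_pmf {..<m} d (\<lambda>_. q)) (\<lambda>x. exp (real k * y * collision_rate h m x))
       \<le> exp (real k * ((y + y^2) * sq_norm_p q h n))"
proof -
  have "measure_pmf.expectation (Pi_pmf {..<m} d (\<lambda>_. q)) (\<lambda>x. exp (real k * y * collision_rate h m x))
      \<le> exp (real k * ((exp y - 1) * sq_norm_p q h n))"
    using expectation_exp_collision_rate_le[OF assms(1-3), where \<theta> = "real k * y" and d = d and q = q]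
      assms(2) by simp
  also have "\<dots> \<le> exp (real k * ((y + y^2) * sq_norm_p q h n))"
    unfolding exp_le_cancel_iff using exp_le_quadratic[OF assms(4)] sq_norm_p_nonneg[of q h n] assms(2)
    by (intro mult_left_mono mult_right_mono) auto
  finally show ?thesis .
qed

lemma collision_rate_upper_tail:
  fixes q :: "'u::finite pmf" and k m :: nat
  assumes "\<And>u. h u \<in> {1..n}" and "0 < k" "2 * k \<le> m" and "0 \<le> \<mu>" "\<mu> \<le> 1"
  shows "measure_pmf.prob (Pi_pmf {..<m} d (\<lambda>_. q)) {x. (1 + t) * sq_norm_p q h n \<le> collision_rate h m x}
       \<le> exp (real k * sq_norm_p q h n * (\<mu>^2 - \<mu> * t))"
proof -
  let ?P = "Pi_pmf {..<m} d (\<lambda>_. q)"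
  let ?s = "sq_norm_p q h n"
  have "measure_pmf.prob ?P {x. (1 + t) * ?s \<le> collision_rate h m x}
      \<le> measure_pmf.prob ?P {x. real k * \<mu> * ((1 + t) * ?s) \<le> real k * \<mu> * collision_rate h m x}"
    by (rule measure_pmf.finite_measure_mono) (auto intro: mult_left_mono simp: assms)
  also have "\<dots> \<le> measure_pmf.expectation ?P (\<lambda>x. exp (real k * \<mu> * collision_rate h m x))
      / exp (real k * \<mu> * ((1 + t) * ?s))"
    by (rule prob_ge_le_expectation_exp) (simp add: integrable_Pi_pmf_finite)
  also have "\<dots> \<le> exp (real k * ((\<mu> + \<mu>^2) * ?s)) / exp (real k * \<mu> * ((1 + t) * ?s))"
    using assms by (intro divide_right_mono expectation_exp_collision_rate_le_quadratic) auto
  also have "\<dots> = exp (real k * ?s * (\<mu>^2 - \<mu> * t))"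
    by (simp add: exp_diff[symmetric] algebra_simps)
  finally show ?thesis .
qed

lemma collision_rate_lower_tail:
  fixes q :: "'u::finite pmf" and k m :: nat
  assumes "\<And>u. h u \<in> {1..n}" and "0 < k" "2 * k \<le> m" and "0 \<le> \<mu>" "\<mu> \<le> 1"
  shows "measure_pmf.prob (Pi_pmf {..<m} d (\<lambda>_. q)) {x. collision_rate h m x \<le> (1 - t) * sq_norm_p q h n}
       \<le> exp (real k * sq_norm_p q h n * (\<mu>^2 - \<mu> * t))"
proof -
  let ?P = "Pi_pmf {..<m} d (\<lambda>_. q)"
  let ?s = "sq_norm_p q h n"
  have "measure_pmf.prob ?P {x. collision_rate h m x \<le> (1 - t) * ?s}
      \<le> measure_pmf.prob ?P {x. real k * -\<mu> * ((1 - t) * ?s) \<le> real k * -\<mu> * collision_rate h m x}"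
    by (rule measure_pmf.finite_measure_mono) (auto intro: mult_left_mono simp: assms)
  also have "\<dots> \<le> measure_pmf.expectation ?P (\<lambda>x. exp (real k * -\<mu> * collision_rate h m x))
      / exp (real k * -\<mu> * ((1 - t) * ?s))"
    by (rule prob_ge_le_expectation_exp) (simp add: integrable_Pi_pmf_finite)
  also have "\<dots> \<le> exp (real k * ((-\<mu> + (-\<mu>)^2) * ?s)) / exp (real k * -\<mu> * ((1 - t) * ?s))"
    using assms by (intro divide_right_mono expectation_exp_collision_rate_le_quadratic) auto
  also have "\<dots> = exp (real k * ?s * (\<mu>^2 - \<mu> * t))"
    by (simp add: exp_diff[symmetric] algebra_simps)
  finally show ?thesis .
qed

lemma collision_rate_concentration:
  fixes q :: "'u::finite pmf" and k m :: nat
  assumes "\<And>u. h u \<in> {1..n}" and "0 < n" "0 < k" "2 * k \<le> m" "0 \<le> \<mu>" "\<mu> \<le> 1"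
  shows "measure_pmf.prob (Pi_pmf {..<m} d (\<lambda>_. q)) {x. \<bar>collision_rate h m x / sq_norm_p q h n - 1\<bar> \<le> t}
       \<ge> 1 - 2 * exp (real k * sq_norm_p q h n * (\<mu>^2 - \<mu> * t))"
proof -
  let ?P = "Pi_pmf {..<m} d (\<lambda>_. q)"
  let ?s = "sq_norm_p q h n"
  let ?good = "{x. \<bar>collision_rate h m x / ?s - 1\<bar> \<le> t}"
  have "0 < 1 / real n"
    using assms(2) by simp
  also have "\<dots> \<le> ?s"
    by (rule inverse_le_sq_norm_p[of h n q, OF assms(1,2)])
  finally have "UNIV - ?good \<subseteq> {x. (1 + t) * ?s \<le> collision_rate h m x} \<union> {x. collision_rate h m x \<le> (1 - t) * ?s}"
    by (auto simp: abs_if field_simps)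
  then have "measure_pmf.prob ?P (UNIV - ?good)
      \<le> measure_pmf.prob ?P ({x. (1 + t) * ?s \<le> collision_rate h m x} \<union> {x. collision_rate h m x \<le> (1 - t) * ?s})"
    by (rule measure_pmf.finite_measure_mono) simp
  also have "\<dots> \<le> measure_pmf.prob ?P {x. (1 + t) * ?s \<le> collision_rate h m x}
       + measure_pmf.prob ?P {x. collision_rate h m x \<le> (1 - t) * ?s}"
    by (rule measure_Un_le) simp_all
  also have "\<dots> \<le> 2 * exp (real k * ?s * (\<mu>^2 - \<mu> * t))"
    using collision_rate_upper_tail[where h=h and d=d and q=q and t=t, OF assms(1,3-6)]
      collision_rate_lower_tail[where h=h and d=d and q=q and t=t, OF assms(1,3-6)] by simp
  finally show ?thesis
    using measure_pmf.prob_compl[of ?good ?P] by simp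
qed

lemma two_exp_le_exp_load:
  fixes \<epsilon> L N y :: real
  assumes "24 < N" "0 < \<epsilon>" "\<epsilon> < 1/3" "1 < L * \<epsilon>^2" "(L - 1 / N) / 2 \<le> y"
  shows "2 * exp (y * ((22 * \<epsilon> / 8)^2 - 22 * \<epsilon> / 8 * (22 * \<epsilon>))) \<le> 10/9 * exp (- L * \<epsilon>^2)"
proof -
  have exponent: "y * ((22 * \<epsilon> / 8)^2 - 22 * \<epsilon> / 8 * (22 * \<epsilon>)) = - (847/16) * \<epsilon>^2 * y"
    by (simp add: power2_eq_square algebra_simps)
  have "\<epsilon>^2 < (1/3)^2"
    using assms(2,3) by (intro power_strict_mono) auto
  then have "\<epsilon>^2 / N \<le> 1/9 / 24"
    using assms(1) by (intro frac_le) (auto simp: power_divide)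
  moreover have "(847/16) * \<epsilon>^2 * ((L - 1 / N) / 2) \<le> (847/16) * \<epsilon>^2 * y"
    by (rule mult_left_mono[OF assms(5)]) simp
  moreover have "(847/16) * \<epsilon>^2 * ((L - 1 / N) / 2) = (847/32) * (L * \<epsilon>^2) - (847/32) * (\<epsilon>^2 / N)"
    using assms(1) by (simp add: field_simps)
  ultimately have "- (847/16) * \<epsilon>^2 * y \<le> - (L * \<epsilon>^2) - 1"
    using assms(4) by linarith
  then have "2 * exp (- (847/16) * \<epsilon>^2 * y) \<le> 2 * exp (- (L * \<epsilon>^2) - 1)"
    by simp
  also have "\<dots> = 2 / exp 1 * exp (- L * \<epsilon>^2)"
    by (simp add: exp_diff)
  also have "2 / exp 1 \<le> (1 :: real)"
    using exp_ge_add_one_self[of "1 :: real"] by simp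
  finally have "2 * exp (- (847/16) * \<epsilon>^2 * y) \<le> exp (- L * \<epsilon>^2)"
    by simp
  then show ?thesis
    unfolding exponent using exp_gt_zero[of "- L * \<epsilon>^2"] by linarith
qed

theorem corollary2:
  fixes q :: "'u::finite pmf" and h :: "'u \<Rightarrow> nat" and n m :: nat and \<epsilon> :: real
  assumes h_range: "\<And>u. h u \<in> {1..n}"
    and n_gt: "n > 24"
    and eps_pos: "0 < \<epsilon>" and eps_lt: "\<epsilon> < 1/3"
    and m_pos: "m > 0"
    and load: "real m / real n > 1 / \<epsilon>^2"
  shows "measure_pmf.prob (sample_pmf q m)
           {x. \<bar>(\<Sum>i=1..n. real (bucket_count h m x i) * (real (bucket_count h m x i) - 1)
                              / (real m * (real m - 1))) / sq_norm_p q h n - 1\<bar> \<le> 22 * \<epsilon>}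
         \<ge> 1 - 10/9 * exp (- (real m / real n) * \<epsilon>^2)"
proof -
  let ?s = "sq_norm_p q h n"
  have n0: "0 < n"
    using n_gt by simp
  have load': "1 < real m / real n * \<epsilon>^2"
    using load eps_pos by (simp add: field_simps)
  moreover have "real m / real n * \<epsilon>^2 \<le> real m / real n"
    using eps_pos eps_lt by (intro mult_left_le power_le_one) auto
  \<comment> \<open>the load condition alone forces \<open>n < m\<close>\<close>
  ultimately have "n < m"
    using n0 by (simp add: field_simps)
  then have k: "0 < m div 2" "2 * (m div 2) \<le> m"
    using n_gt by auto
  have event: "{x. \<bar>(\<Sum>i=1..n. real (bucket_count h m x i) * (real (bucket_count h m x i) - 1)
                   / (real m * (real m - 1))) / ?s - 1\<bar> \<le> 22 * \<epsilon>}
             = {x. \<bar>collision_rate h m x / ?s - 1\<bar> \<le> 22 * \<epsilon>}"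
    unfolding sum_divide_distrib[symmetric] sum_bucket_count_eq_collisions[where h=h, OF h_range]
      collision_rate_def ..
  have "1 - 10/9 * exp (- (real m / real n) * \<epsilon>^2)
      \<le> 1 - 2 * exp (real (m div 2) * ?s * ((22 * \<epsilon> / 8)^2 - 22 * \<epsilon> / 8 * (22 * \<epsilon>)))"
    using two_exp_le_exp_load[OF _ eps_pos eps_lt load'
        half_load_le_mult_sq_norm_p[where h=h and q=q and m=m, OF h_range n0]] n_gt
    by simp
  also have "\<dots> \<le> measure_pmf.prob (Pi_pmf {..<m} undefined (\<lambda>_. q))
      {x. \<bar>collision_rate h m x / ?s - 1\<bar> \<le> 22 * \<epsilon>}"
    by (rule collision_rate_concentration[where h=h and q=q, OF h_range n0 k]) (use eps_pos eps_lt in auto)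
  finally show ?thesis
    unfolding event sample_pmf_def .
qed

end
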